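(* Every finite simple graph $G$ can be embedded in any projective plane of order $q$ with $q\ge v(G)(v(G)-1)/2$.
   Context: $v(G)$ is the number of vertices of $G$. A finite projective plane of order $q$ has $q^2+q+1$ points and lines, $q+1$ points on each line and $q+1$ lines through each point; any two distinct points lie on a unique line and any two lines meet in a unique point. An embedding of a simple graph $G=(V,E)$ into a projective plane is an injective map $\phi$ from $V$ to the points such that the induced map sending an edge $ab$ to the line through $\phi(a),\phi(b)$ is injective on $E$. *)

theory Defs
  imports Main
begin

definition proj_plane :: "'p set \<Rightarrow> 'l set \<Rightarrow> ('p \<Rightarrow> 'l \<Rightarrow> bool) \<Rightarrow> nat \<Rightarrow> bool" where
  "proj_plane P L I q \<longleftrightarrow>
     finite P \<and> finite L \<and>
     card P = q^2 + q + 1 \<and> card L = q^2 + q + 1 \<and>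
     (\<forall>l\<in>L. card {p\<in>P. I p l} = q + 1) \<and>
     (\<forall>p\<in>P. card {l\<in>L. I p l} = q + 1) \<and>
     (\<forall>p\<in>P. \<forall>p'\<in>P. p \<noteq> p' \<longrightarrow> (\<exists>!l. l \<in> L \<and> I p l \<and> I p' l)) \<and>
     (\<forall>l\<in>L. \<forall>l'\<in>L. l \<noteq> l' \<longrightarrow> (\<exists>!p. p \<in> P \<and> I p l \<and> I p l'))"

definition line_through :: "'p set \<Rightarrow> 'l set \<Rightarrow> ('p \<Rightarrow> 'l \<Rightarrow> bool) \<Rightarrow> 'p \<Rightarrow> 'p \<Rightarrow> 'l" where
  "line_through P L I p p' = (THE l. l \<in> L \<and> I p l \<and> I p' l)"

definition simple_graph :: "'v set \<Rightarrow> 'v set set \<Rightarrow> bool" where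
  "simple_graph V E \<longleftrightarrow> finite V \<and> (\<forall>e\<in>E. e \<subseteq> V \<and> card e = 2)"

definition graph_embedding ::
  "'v set \<Rightarrow> 'v set set \<Rightarrow> 'p set \<Rightarrow> 'l set \<Rightarrow> ('p \<Rightarrow> 'l \<Rightarrow> bool) \<Rightarrow> ('v \<Rightarrow> 'p) \<Rightarrow> bool" where
  "graph_embedding V E P L I \<phi> \<longleftrightarrow>
     \<phi> ` V \<subseteq> P \<and> inj_on \<phi> V \<and>
     (\<forall>a\<in>V. \<forall>b\<in>V. \<forall>c\<in>V. \<forall>d\<in>V.
        {a,b} \<in> E \<longrightarrow> {c,d} \<in> E \<longrightarrow>
        line_through P L I (\<phi> a) (\<phi> b) = line_through P L I (\<phi> c) (\<phi> d) \<longrightarrow>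
        {a,b} = {c,d})"

end

theory Submission
  imports Defs
begin

text \<open>Place the vertices on an arc, a set of points no three of which are collinear: then
  distinct edges span distinct lines. An arc S with k points has at most k choose 2
  secants, which cover at most k + (k choose 2)(q + 1) points; as long as this is less than
  q^2 + q + 1 some point lies on no secant and can be added to S. Greedily this yields an
  arc with n points whenever n(n - 1) \<le> 2q.\<close>

definition arc :: "'p set \<Rightarrow> 'l set \<Rightarrow> ('p \<Rightarrow> 'l \<Rightarrow> bool) \<Rightarrow> 'p set \<Rightarrow> bool" where
  "arc P L I S \<longleftrightarrow> S \<subseteq> P \<and> (\<forall>l\<in>L. card {p\<in>S. I p l} \<le> 2)"

lemma proj_plane_finite:
  assumes "proj_plane P L I q"
  shows "finite P" "finite L"
  using assms unfolding proj_plane_def by auto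

lemma arc_finite:
  assumes "proj_plane P L I q" "arc P L I S"
  shows "finite S"
proof -
  have "S \<subseteq> P" using assms(2) unfolding arc_def by blast
  with proj_plane_finite(1)[OF assms(1)] show ?thesis by (rule rev_finite_subset)
qed

lemma line_through_incident:
  assumes "proj_plane P L I q" "p \<in> P" "p' \<in> P" "p \<noteq> p'"
  shows "line_through P L I p p' \<in> L" "I p (line_through P L I p p')"
    "I p' (line_through P L I p p')"
proof -
  have "\<exists>!l. l \<in> L \<and> I p l \<and> I p' l" using assms unfolding proj_plane_def by blast
  from theI'[OF this] show "line_through P L I p p' \<in> L" "I p (line_through P L I p p')"
    "I p' (line_through P L I p p')" unfolding line_through_def by blast+
qed

lemma proj_plane_line_unique:
  assumes "proj_plane P L I q" "l \<in> L" "l' \<in> L" "x \<in> P" "y \<in> P" "x \<noteq> y"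
    and "I x l" "I y l" "I x l'" "I y l'"
  shows "l = l'"
  using assms unfolding proj_plane_def by blast

lemma arc_not_collinear:
  assumes "arc P L I S" "finite S" "l \<in> L"
    and "x \<in> S" "y \<in> S" "z \<in> S" "x \<noteq> y" "x \<noteq> z" "y \<noteq> z"
    and "I x l" "I y l"
  shows "\<not> I z l"
proof
  assume "I z l"
  with assms have "{x, y, z} \<subseteq> {p\<in>S. I p l}" by auto
  from card_mono[OF _ this] have "3 \<le> card {p\<in>S. I p l}"
    using assms by simp
  with assms(1,3) show False unfolding arc_def by fastforce
qed

lemma card_arc_secants:
  assumes "proj_plane P L I q" "arc P L I S"
  shows "card {l\<in>L. card {p\<in>S. I p l} = 2} \<le> card S choose 2"
proof -
  let ?sec = "{l\<in>L. card {p\<in>S. I p l} = 2}"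
  have S: "S \<subseteq> P" "finite S" using assms arc_finite[OF assms] unfolding arc_def by auto
  have "inj_on (\<lambda>l. {p\<in>S. I p l}) ?sec"
  proof (rule inj_onI)
    fix l l' assume "l \<in> ?sec" "l' \<in> ?sec" and eq: "{p\<in>S. I p l} = {p\<in>S. I p l'}"
    then obtain x y where "x \<noteq> y" "{p\<in>S. I p l} = {x, y}" by (auto simp: card_2_iff)
    with eq \<open>l \<in> ?sec\<close> \<open>l' \<in> ?sec\<close> S(1) show "l = l'"
      by (intro proj_plane_line_unique[OF assms(1), of l l' x y]) blast+
  qed
  then have "card ?sec = card ((\<lambda>l. {p\<in>S. I p l}) ` ?sec)" by (rule card_image[symmetric])
  also have "\<dots> \<le> card {e. e \<subseteq> S \<and> card e = 2}"
    using S(2) by (intro card_mono) auto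
  also have "\<dots> = card S choose 2" using n_subsets[OF S(2)] by simp
  finally show ?thesis .
qed

lemma arc_insert:
  assumes "arc P L I S" "p \<in> P"
    and off_secants: "\<And>l. l \<in> L \<Longrightarrow> I p l \<Longrightarrow> card {x\<in>S. I x l} \<noteq> 2"
    and "finite S"
  shows "arc P L I (insert p S)"
  unfolding arc_def
proof (intro conjI ballI)
  show "insert p S \<subseteq> P" using assms unfolding arc_def by auto
  fix l assume l: "l \<in> L"
  have le2: "card {x\<in>S. I x l} \<le> 2" using assms(1) l unfolding arc_def by blast
  show "card {x\<in>insert p S. I x l} \<le> 2"
  proof (cases "I p l")
    case False
    then have "{x\<in>insert p S. I x l} = {x\<in>S. I x l}" by auto
    with le2 show ?thesis by simp
  next
    case True
    then have "{x\<in>insert p S. I x l} = insert p {x\<in>S. I x l}" by auto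
    moreover have "card {x\<in>S. I x l} \<le> 1" using le2 off_secants[OF l True] by linarith
    ultimately show ?thesis using card_insert_le_m1 \<open>finite S\<close> by (simp add: card_insert_if)
  qed
qed

lemma arc_extend:
  assumes pp: "proj_plane P L I q" and S: "arc P L I S"
    and room: "card S + (card S choose 2) * (q + 1) < q^2 + q + 1"
  shows "\<exists>p\<in>P - S. arc P L I (insert p S)"
proof -
  let ?sec = "{l\<in>L. card {p\<in>S. I p l} = 2}"
  define covered where "covered = S \<union> (\<Union>l\<in>?sec. {p\<in>P. I p l})"
  have fS: "finite S" using arc_finite[OF pp S] .
  have fL: "finite L" and fP: "finite P" using proj_plane_finite[OF pp] by blast+
  have line_size: "\<forall>l\<in>L. card {p\<in>P. I p l} = q + 1" and cP: "card P = q^2 + q + 1"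
    using pp by (simp_all add: proj_plane_def)
  have "card covered \<le> card S + card (\<Union>l\<in>?sec. {p\<in>P. I p l})"
    unfolding covered_def by (rule card_Un_le)
  also have "card (\<Union>l\<in>?sec. {p\<in>P. I p l}) \<le> (\<Sum>l\<in>?sec. card {p\<in>P. I p l})"
    using fL by (intro card_UN_le) simp
  also have "\<dots> = card ?sec * (q + 1)" using line_size by simp
  also have "\<dots> \<le> (card S choose 2) * (q + 1)"
    using card_arc_secants[OF pp S] by (rule mult_le_mono1)
  finally have "card covered < card P" using room cP by linarith
  moreover have "finite covered" unfolding covered_def using fS fL fP by auto
  ultimately have "\<not> P \<subseteq> covered" using card_mono by (metis leD)
  then obtain p where p: "p \<in> P" "p \<notin> covered" by blast
  have "arc P L I (insert p S)"
  proof (rule arc_insert[OF S p(1) _ fS])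
    fix l assume "l \<in> L" "I p l"
    then show "card {x\<in>S. I x l} \<noteq> 2" using p(2) p(1) unfolding covered_def by blast
  qed
  moreover have "p \<notin> S" using p(2) unfolding covered_def by blast
  ultimately show ?thesis using p(1) by blast
qed

lemma greedy_room:
  fixes n q :: nat
  assumes "(n + 1) * n \<le> 2 * q"
  shows "n + (n choose 2) * (q + 1) < q^2 + q + 1"
proof -
  have "2 * (n choose 2) = n * (n - 1)" by (cases n) (auto simp: choose_two)
  also have "n * (n - 1) + 2 * n = (n + 1) * n" by (cases n) (auto simp: algebra_simps)
  finally have "(n choose 2) + n \<le> q" using assms by linarith
  then have "((n choose 2) + n) * (q + 1) \<le> q * (q + 1)" by (rule mult_le_mono1)
  moreover have "n \<le> n * (q + 1)" by simp
  ultimately show ?thesis by (simp add: power2_eq_square algebra_simps)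
qed

lemma arc_exists:
  assumes pp: "proj_plane P L I q" and "n * (n - 1) \<le> 2 * q"
  shows "\<exists>S. arc P L I S \<and> card S = n"
  using assms(2)
proof (induction n)
  case 0
  show ?case by (rule exI[of _ "{}"]) (simp add: arc_def)
next
  case (Suc n)
  then have "n * (n - 1) \<le> 2 * q" by (cases n) auto
  with Suc.IH obtain S where S: "arc P L I S" "card S = n" by blast
  from greedy_room Suc.prems S(2)
  have "card S + (card S choose 2) * (q + 1) < q^2 + q + 1" by (simp add: mult.commute)
  from arc_extend[OF pp S(1) this] obtain p where "p \<in> P - S" "arc P L I (insert p S)"
    by blast
  with S arc_finite[OF pp S(1)] show ?case by auto
qed

lemma arc_graph_embedding:
  assumes G: "simple_graph V E" and pp: "proj_plane P L I q" and S: "arc P L I S"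
    and inj: "inj_on \<phi> V" and img: "\<phi> ` V \<subseteq> S"
  shows "graph_embedding V E P L I \<phi>"
  unfolding graph_embedding_def
proof (intro conjI ballI impI)
  show SP: "\<phi> ` V \<subseteq> P" using img S unfolding arc_def by blast
  show "inj_on \<phi> V" by (rule inj)
  fix a b c d assume V: "a \<in> V" "b \<in> V" "c \<in> V" "d \<in> V"
    and "{a, b} \<in> E" "{c, d} \<in> E"
    and eq: "line_through P L I (\<phi> a) (\<phi> b) = line_through P L I (\<phi> c) (\<phi> d)"
  then have "a \<noteq> b" "c \<noteq> d" using G unfolding simple_graph_def by fastforce+
  then have ne: "\<phi> a \<noteq> \<phi> b" "\<phi> c \<noteq> \<phi> d" using inj V by (auto dest: inj_onD)
  define l where "l = line_through P L I (\<phi> a) (\<phi> b)"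
  have l: "l \<in> L" "I (\<phi> a) l" "I (\<phi> b) l"
    using line_through_incident[OF pp _ _ ne(1)] SP V unfolding l_def by auto
  have "I (\<phi> c) l" "I (\<phi> d) l"
    using line_through_incident[OF pp _ _ ne(2)] SP V eq unfolding l_def by auto
  have on_edge: "x \<in> {a, b}" if "x \<in> V" "I (\<phi> x) l" for x
  proof (rule ccontr)
    assume "x \<notin> {a, b}"
    then have "\<phi> x \<noteq> \<phi> a" "\<phi> x \<noteq> \<phi> b" using inj V that by (auto dest: inj_onD)
    with arc_not_collinear[OF S arc_finite[OF pp S] l(1)] ne(1) l img V that show False by blast
  qed
  from on_edge[of c] on_edge[of d] V \<open>I (\<phi> c) l\<close> \<open>I (\<phi> d) l\<close> \<open>c \<noteq> d\<close>
  show "{a, b} = {c, d}" by auto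
qed

theorem corollary2p16:
  fixes V :: "'v set" and E :: "'v set set"
    and P :: "'p set" and L :: "'l set" and I :: "'p \<Rightarrow> 'l \<Rightarrow> bool" and q :: nat
  assumes "simple_graph V E"
    and "proj_plane P L I q"
    and "2 * q \<ge> card V * (card V - 1)"
  shows "\<exists>\<phi>. graph_embedding V E P L I \<phi>"
proof -
  obtain S where S: "arc P L I S" "card S = card V"
    using arc_exists[OF assms(2,3)] by blast
  have "finite V" using assms(1) unfolding simple_graph_def by simp
  then obtain \<phi> where "bij_betw \<phi> V S"
    using finite_same_card_bij arc_finite[OF assms(2) S(1)] S(2) by metis
  then have "graph_embedding V E P L I \<phi>"
    using arc_graph_embedding[OF assms(1,2) S(1)] unfolding bij_betw_def by blast
  then show ?thesis by blast
qed

end
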